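(* Let $1\le p<\infty$, let $T:\mathcal V(\mathbb{R}^n)\to\mathcal V(\mathbb{R}^n)$ be a rearrangement and let $\mathcal W$ be a family of rearrangements from $\mathcal V(\mathbb{R}^n)$ to $\mathcal V(\mathbb{R}^n)$. The following are equivalent: (i) $T$ is approximable in $L^p$ on $L^p_+(\mathbb{R}^n)$ by maps in $\mathcal W$; (ii) $\diamond_T$ is approximable on $\mathcal L^n$ by maps in $\{\diamond_W:W\in\mathcal W\}$; (iii) $\diamond_T$ is approximable on $\mathcal C^n$ by maps in $\{\diamond_W:W\in\mathcal W\}$. The equivalence remains true if "approximable" is replaced throughout by "sequentially approximable". Moreover, (i)$\Rightarrow$(ii)$\Leftrightarrow$(iii) also holds with "approximable" replaced throughout by "weakly approximable".
   Context: $\mathcal V(\mathbb{R}^n)$: nonnegative measurable $f$ on $\mathbb{R}^n$ with $\mathcal H^n(\{f>t\})<\infty$ for all $t>0$. A rearrangement is a map $T$ that is equimeasurable ($\mathcal H^n(\{Tf>t\})=\mathcal H^n(\{f>t\})$ for all $t$) and monotonic ($f\le g$ a.e. implies $Tf\le Tg$ a.e.). $\mathcal L^n$: measurable sets of finite measure; $\mathcal C^n$: nonempty compact sets. The induced set map is $\diamond_TA=\{x:T1_A(x)=1\}$. For maps on functions: $T$ is approximable in $L^p$ on $X$ by $\mathcal W$ if there are $T_k\in\mathcal W$ with $\|T_kf-Tf\|_p\to0$ for all $f\in X$; weakly approximable if the $T_k$ may depend on $f$; sequentially approximable if $T_k=S_k\circ\cdots\circ S_1$ for a fixed sequence $(S_k)$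 in $\mathcal W$. For set maps the same notions are defined with $\|1_{\diamond_kA}-1_{\diamond A}\|_1\to0$ for all $A$ in the class. *)

theory Defs
  imports "HOL-Analysis.Analysis"
begin

text \<open>The ambient space R^n is an arbitrary Euclidean space 'a; Hausdorff measure H^n
  is Lebesgue measure.\<close>

definition V_fun :: "('a::euclidean_space \<Rightarrow> real) set" where
  "V_fun = {f. f \<in> borel_measurable lebesgue \<and> (\<forall>x. 0 \<le> f x) \<and>
               (\<forall>t>0. emeasure lebesgue {x. f x > t} < \<infinity>)}"

definition rearrangement :: "(('a::euclidean_space \<Rightarrow> real) \<Rightarrow> ('a \<Rightarrow> real)) \<Rightarrow> bool" where
  "rearrangement T \<longleftrightarrow>
     (\<forall>f\<in>V_fun. T f \<in> V_fun) \<and>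
     (\<forall>f\<in>V_fun. \<forall>t. emeasure lebesgue {x. T f x > t} = emeasure lebesgue {x. f x > t}) \<and>
     (\<forall>f\<in>V_fun. \<forall>g\<in>V_fun. (AE x in lebesgue. f x \<le> g x) \<longrightarrow> (AE x in lebesgue. T f x \<le> T g x))"

definition diamond :: "(('a::euclidean_space \<Rightarrow> real) \<Rightarrow> ('a \<Rightarrow> real)) \<Rightarrow> 'a set \<Rightarrow> 'a set" where
  "diamond T A = {x. T (indicator A) x = 1}"

definition Lp_plus :: "real \<Rightarrow> ('a::euclidean_space \<Rightarrow> real) set" where
  "Lp_plus p = {f. f \<in> borel_measurable lebesgue \<and> (\<forall>x. 0 \<le> f x) \<and>
                   (\<integral>\<^sup>+ x. ennreal (\<bar>f x\<bar> powr p) \<partial>lebesgue) < \<infinity>}"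

definition fin_meas_sets :: "('a::euclidean_space) set set" where
  "fin_meas_sets = {A. A \<in> sets lebesgue \<and> emeasure lebesgue A < \<infinity>}"

definition compact_sets :: "('a::euclidean_space) set set" where
  "compact_sets = {K. K \<noteq> {} \<and> compact K}"

text \<open>p-th power of the L^p distance (tends to 0 iff the L^p norm does).\<close>
definition Lp_dist_pow :: "real \<Rightarrow> ('a::euclidean_space \<Rightarrow> real) \<Rightarrow> ('a \<Rightarrow> real) \<Rightarrow> ennreal" where
  "Lp_dist_pow p f g = (\<integral>\<^sup>+ x. ennreal (\<bar>f x - g x\<bar> powr p) \<partial>lebesgue)"

definition ind_dist :: "('a::euclidean_space) set \<Rightarrow> 'a set \<Rightarrow> ennreal" where
  "ind_dist A B = (\<integral>\<^sup>+ x. ennreal \<bar>indicator A x - indicator B x :: real\<bar> \<partial>lebesgue)"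

primrec seqcomp :: "(nat \<Rightarrow> 'b \<Rightarrow> 'b) \<Rightarrow> nat \<Rightarrow> 'b \<Rightarrow> 'b" where
  "seqcomp S 0 = id"
| "seqcomp S (Suc k) = S k \<circ> seqcomp S k"

definition approximable :: "('b \<Rightarrow> 'b \<Rightarrow> ennreal) \<Rightarrow> 'b set \<Rightarrow> ('b \<Rightarrow> 'b) set \<Rightarrow> ('b \<Rightarrow> 'b) \<Rightarrow> bool" where
  "approximable d X W T \<longleftrightarrow>
     (\<exists>Tk. (\<forall>k. Tk k \<in> W) \<and> (\<forall>f\<in>X. (\<lambda>k. d (Tk k f) (T f)) \<longlonglongrightarrow> 0))"

definition weakly_approximable :: "('b \<Rightarrow> 'b \<Rightarrow> ennreal) \<Rightarrow> 'b set \<Rightarrow> ('b \<Rightarrow> 'b) set \<Rightarrow> ('b \<Rightarrow> 'b) \<Rightarrow> bool" where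
  "weakly_approximable d X W T \<longleftrightarrow>
     (\<forall>f\<in>X. \<exists>Tk. (\<forall>k. Tk k \<in> W) \<and> (\<lambda>k. d (Tk k f) (T f)) \<longlonglongrightarrow> 0)"

definition seq_approximable :: "('b \<Rightarrow> 'b \<Rightarrow> ennreal) \<Rightarrow> 'b set \<Rightarrow> ('b \<Rightarrow> 'b) set \<Rightarrow> ('b \<Rightarrow> 'b) \<Rightarrow> bool" where
  "seq_approximable d X W T \<longleftrightarrow>
     (\<exists>S. (\<forall>k. S k \<in> W) \<and> (\<forall>f\<in>X. (\<lambda>k. d (seqcomp S (Suc k) f) (T f)) \<longlonglongrightarrow> 0))"

end

theory Submission
  imports Defs
begin

text \<open>A rearrangement R sends \<open>c \<cdot> 1\<^sub>E\<close> to \<open>c \<cdot> 1\<^bsub>\<diamond>E\<^esub>\<close> a.e., and it commutes with superlevel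
  sets: \<open>{R f > t} = \<diamond>{f > t}\<close> a.e. Monotonicity and equimeasurability make \<open>\<diamond>\<close> a contraction
  for the L^1 distance of sets. Hence L^p convergence at indicators is exactly L^1 convergence of
  the induced set maps. Conversely, since \<open>|a - b|\<^sup>p \<le> |a\<^sup>p - b\<^sup>p|\<close>, Fubini bounds
  \<open>\<parallel>R\<^sub>k f - T f\<parallel>\<^sub>p\<^sup>p\<close> by the integral over \<open>t\<close> of the distances between the sets
  \<open>\<diamond>\<^sub>k{f\<^sup>p > t}\<close> and \<open>\<diamond>{f\<^sup>p > t}\<close>; these tend to 0 and are dominated by \<open>2 |{f\<^sup>p > t}|\<close>,
  whose integral is \<open>2 \<parallel>f\<parallel>\<^sub>p\<^sup>p\<close>. Sets of finite measure are approximated in measure by compact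
  sets, and the contraction property carries convergence from compact sets to all of them.
  Sequential approximation is preserved because \<open>\<diamond>\<close> of a composition agrees a.e. with the
  composition of the \<open>\<diamond>\<close>'s.\<close>

\<comment> \<open>keep measures of Lebesgue sets from being rewritten to their Borel main parts\<close>
declare emeasure_completion[simp del]

lemma sigma_finite_lebesgue: "sigma_finite_measure (lebesgue :: 'a::euclidean_space measure)"
proof (rule sigma_finite_measure.intro, intro exI[of _ "range (\<lambda>n::nat. cball (0::'a) (real n))"] conjI)
  show "countable (range (\<lambda>n::nat. cball (0::'a) (real n)))" by simp
  show "range (\<lambda>n::nat. cball (0::'a) (real n)) \<subseteq> sets lebesgue" by auto
  show "\<Union> (range (\<lambda>n::nat. cball (0::'a) (real n))) = space lebesgue"
    by (auto simp: dist_norm intro: real_arch_simple)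
  show "\<forall>a\<in>range (\<lambda>n::nat. cball (0::'a) (real n)). emeasure lebesgue a \<noteq> \<infinity>"
    using lmeasurable_compact[of "cball (0::'a) _"] by (auto simp: fmeasurable_def less_top)
qed

interpretation lebesgue_lborel: pair_sigma_finite "lebesgue :: 'a::euclidean_space measure" lborel
  by (intro pair_sigma_finite.intro sigma_finite_lebesgue lborel.sigma_finite_measure_axioms)

lemma emeasure_Diff_AE_subset:
  assumes "X \<in> sets M" "Y \<in> sets M" "AE x in M. x \<in> X \<longrightarrow> x \<in> Y" "emeasure M Y < \<infinity>"
  shows "emeasure M (Y - X) = emeasure M Y - emeasure M X"
proof -
  have "emeasure M (X \<inter> Y) = emeasure M X"
    using assms by (intro emeasure_eq_AE) auto
  moreover have "Y - X = Y - X \<inter> Y" by blast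
  then have "emeasure M (Y - X) = emeasure M Y - emeasure M (X \<inter> Y)"
    using assms emeasure_mono[of "X \<inter> Y" Y M] by (auto simp: top_unique intro!: emeasure_Diff)
  ultimately show ?thesis by simp
qed

lemma AE_iff_if_AE_imp_emeasure_eq:
  assumes "X \<in> sets M" "Y \<in> sets M" "AE x in M. x \<in> X \<longrightarrow> x \<in> Y"
    and "emeasure M X = emeasure M Y" "emeasure M Y < \<infinity>"
  shows "AE x in M. x \<in> X \<longleftrightarrow> x \<in> Y"
proof -
  have "Y - X \<in> null_sets M"
    using assms emeasure_Diff_AE_subset[of X M Y] by auto
  then have "AE x in M. x \<notin> Y - X" by (rule AE_not_in)
  then show ?thesis using assms(3) by eventually_elim auto
qed

lemma lebesgue_superlevel_set:
  assumes "f \<in> borel_measurable lebesgue"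
  shows "{x. t < (f x :: real)} \<in> sets lebesgue"
proof -
  have "{x \<in> space lebesgue. t < f x} \<in> sets lebesgue" using assms by measurable
  then show ?thesis by simp
qed

lemma lebesgue_level_set:
  assumes "f \<in> borel_measurable lebesgue"
  shows "{x. f x = (t :: real)} \<in> sets lebesgue"
proof -
  have "{x \<in> space lebesgue. f x = t} \<in> sets lebesgue" using assms by measurable
  then show ?thesis by simp
qed

lemma V_funD:
  assumes "f \<in> V_fun"
  shows "f \<in> borel_measurable lebesgue" "\<And>x. 0 \<le> f x"
    "\<And>t. t > 0 \<Longrightarrow> emeasure lebesgue {x. f x > t} < \<infinity>"
  using assms by (auto simp: V_fun_def)

lemma rearrangementD:
  assumes "rearrangement R"
  shows "\<And>f. f \<in> V_fun \<Longrightarrow> R f \<in> V_fun"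
    "\<And>f t. f \<in> V_fun \<Longrightarrow> emeasure lebesgue {x. R f x > t} = emeasure lebesgue {x. f x > t}"
    "\<And>f g. f \<in> V_fun \<Longrightarrow> g \<in> V_fun \<Longrightarrow> AE x in lebesgue. f x \<le> g x \<Longrightarrow>
       AE x in lebesgue. R f x \<le> R g x"
  using assms unfolding rearrangement_def by blast+

lemma fin_meas_setsD:
  assumes "A \<in> fin_meas_sets"
  shows "A \<in> sets lebesgue" "emeasure lebesgue A < \<infinity>"
  using assms by (auto simp: fin_meas_sets_def)

lemma fin_meas_sets_Int: "A \<in> fin_meas_sets \<Longrightarrow> B \<in> sets lebesgue \<Longrightarrow> A \<inter> B \<in> fin_meas_sets"
  using emeasure_mono[of "A \<inter> B" A lebesgue] by (auto simp: fin_meas_sets_def)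

lemma fin_meas_sets_Un:
  assumes A: "A \<in> fin_meas_sets" and B: "B \<in> fin_meas_sets"
  shows "A \<union> B \<in> fin_meas_sets"
proof -
  have "emeasure lebesgue (A \<union> B) \<le> emeasure lebesgue A + emeasure lebesgue B"
    using fin_meas_setsD(1) A B by (intro emeasure_subadditive)
  also have "\<dots> < \<infinity>" using fin_meas_setsD(2)[OF A] fin_meas_setsD(2)[OF B] by simp
  finally show ?thesis using fin_meas_setsD(1) A B by (auto simp: fin_meas_sets_def)
qed

lemma compact_sets_subset_fin_meas_sets: "compact_sets \<subseteq> fin_meas_sets"
  using lmeasurable_compact by (auto simp: compact_sets_def fin_meas_sets_def fmeasurable_def)

lemma superlevel_set_in_fin_meas_sets: "f \<in> V_fun \<Longrightarrow> t > 0 \<Longrightarrow> {x. t < f x} \<in> fin_meas_sets"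
  using V_funD lebesgue_superlevel_set unfolding fin_meas_sets_def by blast

lemma scaled_indicator_in_V_fun:
  assumes "A \<in> fin_meas_sets" "c \<ge> 0"
  shows "(\<lambda>x. c * indicator A x) \<in> V_fun"
proof -
  have "emeasure lebesgue {x. c * indicator A x > t} < \<infinity>" if "t > 0" for t :: real
  proof -
    have "{x. c * indicator A x > t} \<subseteq> A" using that by (auto simp: indicator_def split: if_splits)
    then have "emeasure lebesgue {x. c * indicator A x > t} \<le> emeasure lebesgue A"
      using fin_meas_setsD(1)[OF assms(1)] by (intro emeasure_mono)
    then show ?thesis using fin_meas_setsD(2)[OF assms(1)] by auto
  qed
  then show ?thesis using fin_meas_setsD(1)[OF assms(1)] assms(2) unfolding V_fun_def by auto
qed

lemma indicator_in_V_fun: "A \<in> fin_meas_sets \<Longrightarrow> indicator A \<in> V_fun"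
  using scaled_indicator_in_V_fun[of A 1] by simp

lemma rearrangement_AE_cong:
  assumes R: "rearrangement R" and f: "f \<in> V_fun" and g: "g \<in> V_fun"
    and fg: "AE x in lebesgue. f x = g x"
  shows "AE x in lebesgue. R f x = R g x"
proof -
  have "AE x in lebesgue. R f x \<le> R g x" using fg by (intro rearrangementD(3)[OF R f g]) auto
  moreover have "AE x in lebesgue. R g x \<le> R f x" using fg by (intro rearrangementD(3)[OF R g f]) auto
  ultimately show ?thesis by eventually_elim auto
qed

lemma superlevel_set_scaled_indicator:
  fixes c t :: real
  assumes "c \<ge> 0"
  shows "{x. t < c * indicator E x} = (if t < 0 then UNIV else if t < c then E else {})"
  using assms by (auto simp: indicator_def)

lemma AE_two_valued_if_superlevel_measures:
  fixes g :: "'a::euclidean_space \<Rightarrow> real"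
  assumes g_meas: "g \<in> borel_measurable lebesgue" and g_nonneg: "\<And>x. 0 \<le> g x" and c: "c > 0"
    and above: "emeasure lebesgue {x. g x > c} = 0"
    and below: "\<And>r. 0 \<le> r \<Longrightarrow> r < c \<Longrightarrow> emeasure lebesgue {x. g x > r} = emeasure lebesgue {x. g x > 0}"
    and fin: "emeasure lebesgue {x. g x > 0} < \<infinity>"
  shows "AE x in lebesgue. g x = 0 \<or> g x = c"
proof -
  have gap_null: "{x. g x > 0} - {x. g x > r} \<in> null_sets lebesgue" if r: "0 \<le> r" "r < c" for r
  proof -
    have "emeasure lebesgue ({x. g x > 0} - {x. g x > r}) =
        emeasure lebesgue {x. g x > 0} - emeasure lebesgue {x. g x > r}"
      using r fin below[OF r] lebesgue_superlevel_set[OF g_meas]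
      by (intro emeasure_Diff) (auto intro: le_less_trans[OF r(1)])
    also have "\<dots> = 0" using below[OF r] fin by simp
    finally show ?thesis using lebesgue_superlevel_set[OF g_meas] by auto
  qed
  define F where "F n = {x. g x > 0} - {x. g x > c * (1 - 1 / (real n + 2))}" for n :: nat
  have "F n \<in> null_sets lebesgue" for n
    unfolding F_def using c by (intro gap_null) (auto simp: field_simps)
  moreover have "{x. g x > c} \<in> null_sets lebesgue"
    using above lebesgue_superlevel_set[OF g_meas] by (intro null_setsI) auto
  ultimately have "(\<Union>n. F n) \<union> {x. g x > c} \<in> null_sets lebesgue" by auto
  moreover have "{x \<in> space lebesgue. \<not> (g x = 0 \<or> g x = c)} \<subseteq> (\<Union>n. F n) \<union> {x. g x > c}"
  proof (intro subsetI UnCI)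
    fix x assume x: "x \<in> {x \<in> space lebesgue. \<not> (g x = 0 \<or> g x = c)}" "x \<notin> {x. g x > c}"
    then have gx: "0 < g x" "g x < c" using g_nonneg[of x] by auto
    then have "1 - g x / c > 0" using c by (auto simp: field_simps)
    then obtain n :: nat where "inverse (real (Suc n)) < 1 - g x / c"
      using reals_Archimedean by blast
    moreover have "1 / (real n + 2) \<le> inverse (real (Suc n))" by (simp add: field_simps)
    ultimately have "1 / (real n + 2) < 1 - g x / c" by linarith
    then have "g x \<le> c * (1 - 1 / (real n + 2))" using c by (auto simp: field_simps)
    then have "x \<in> F n" using gx by (auto simp: F_def)
    then show "x \<in> (\<Union>n. F n)" by blast
  qed
  ultimately show ?thesis by (rule AE_I')
qed

lemma rearrangement_scaled_indicator:
  assumes R: "rearrangement R" and E: "E \<in> fin_meas_sets" and c: "c > 0"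
  defines "g \<equiv> R (\<lambda>x. c * indicator E x)"
  shows "AE x in lebesgue. g x = c * indicator {y. g y = c} x"
    and "emeasure lebesgue {x. g x = c} = emeasure lebesgue E"
proof -
  have V: "(\<lambda>x. c * indicator E x) \<in> V_fun" using scaled_indicator_in_V_fun[OF E] c by simp
  have gV: "g \<in> V_fun" unfolding g_def using rearrangementD(1)[OF R V] .
  note g_meas = V_funD(1)[OF gV]
  have level: "emeasure lebesgue {x. g x > t} =
      (if t < 0 then emeasure lebesgue (UNIV :: 'a set) else if t < c then emeasure lebesgue E else 0)" for t
    unfolding g_def rearrangementD(2)[OF R V] superlevel_set_scaled_indicator[OF less_imp_le[OF c]]
    by simp
  have two_valued: "AE x in lebesgue. g x = 0 \<or> g x = c"
    using level c fin_meas_setsD(2)[OF E]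
    by (intro AE_two_valued_if_superlevel_measures[OF g_meas V_funD(2)[OF gV] c]) auto
  then show "AE x in lebesgue. g x = c * indicator {y. g y = c} x"
    by eventually_elim (auto simp: indicator_def)
  have "emeasure lebesgue {x. g x = c} = emeasure lebesgue {x. g x > c / 2}"
    using two_valued c lebesgue_level_set[OF g_meas] lebesgue_superlevel_set[OF g_meas, of "c/2"]
    by (intro emeasure_eq_AE) auto
  also have "\<dots> = emeasure lebesgue E" using level[of "c/2"] c by simp
  finally show "emeasure lebesgue {x. g x = c} = emeasure lebesgue E" .
qed

lemma rearrangement_indicator_AE:
  assumes "rearrangement R" "E \<in> fin_meas_sets"
  shows "AE x in lebesgue. R (indicator E) x = indicator (diamond R E) x"
  using rearrangement_scaled_indicator(1)[OF assms zero_less_one] by (simp add: diamond_def)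

lemma emeasure_diamond:
  assumes "rearrangement R" "E \<in> fin_meas_sets"
  shows "emeasure lebesgue (diamond R E) = emeasure lebesgue E"
  using rearrangement_scaled_indicator(2)[OF assms zero_less_one] by (simp add: diamond_def)

lemma diamond_in_fin_meas_sets:
  assumes R: "rearrangement R" and E: "E \<in> fin_meas_sets"
  shows "diamond R E \<in> fin_meas_sets"
proof -
  have "diamond R E \<in> sets lebesgue"
    unfolding diamond_def
    using lebesgue_level_set V_funD(1)[OF rearrangementD(1)[OF R indicator_in_V_fun[OF E]]] by blast
  then show ?thesis using emeasure_diamond[OF R E] fin_meas_setsD[OF E] by (auto simp: fin_meas_sets_def)
qed

lemma diamond_AE_mono:
  assumes R: "rearrangement R" and A: "A \<in> fin_meas_sets" and B: "B \<in> fin_meas_sets"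
    and AB: "A \<subseteq> B"
  shows "AE x in lebesgue. x \<in> diamond R A \<longrightarrow> x \<in> diamond R B"
proof -
  have "AE x in lebesgue. R (indicator A) x \<le> R (indicator B) x"
    using AB by (intro rearrangementD(3)[OF R indicator_in_V_fun[OF A] indicator_in_V_fun[OF B]])
      (auto simp: indicator_def)
  then show ?thesis using rearrangement_indicator_AE[OF R A] rearrangement_indicator_AE[OF R B]
    by eventually_elim (auto simp: indicator_def split: if_splits)
qed

lemma diamond_AE_cong:
  assumes R: "rearrangement R" and A: "A \<in> fin_meas_sets" and B: "B \<in> fin_meas_sets"
    and AB: "AE x in lebesgue. x \<in> A \<longleftrightarrow> x \<in> B"
  shows "AE x in lebesgue. x \<in> diamond R A \<longleftrightarrow> x \<in> diamond R B"
proof -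
  have "AE x in lebesgue. indicator A x = (indicator B x :: real)"
    using AB by eventually_elim (auto simp: indicator_def)
  then have "AE x in lebesgue. R (indicator A) x = R (indicator B) x"
    by (rule rearrangement_AE_cong[OF R indicator_in_V_fun[OF A] indicator_in_V_fun[OF B]])
  then show ?thesis by eventually_elim (auto simp: diamond_def)
qed

lemma rearrangement_scaled_indicator_AE:
  assumes R: "rearrangement R" and E: "E \<in> fin_meas_sets" and c: "c > 0"
  shows "AE x in lebesgue. R (\<lambda>x. c * indicator E x) x = c * indicator (diamond R E) x"
proof -
  define g where "g = R (\<lambda>x. c * indicator E x)"
  define B where "B = {x. g x = c}"
  note g_shape = rearrangement_scaled_indicator[OF R E c, folded g_def, folded B_def]
  have V: "(\<lambda>x. c * indicator E x) \<in> V_fun" using scaled_indicator_in_V_fun[OF E] c by simp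
  have B_meas: "B \<in> sets lebesgue"
    unfolding B_def g_def using lebesgue_level_set V_funD(1)[OF rearrangementD(1)[OF R V]] by blast
  note dE = fin_meas_setsD[OF diamond_in_fin_meas_sets[OF R E]]
  note R1 = rearrangement_indicator_AE[OF R E]
  \<comment> \<open>B and diamond R E have equal finite measure, so one a.e. inclusion suffices;
    it comes from comparing c * indicator E with indicator E\<close>
  have "AE x in lebesgue. x \<in> B \<longleftrightarrow> x \<in> diamond R E"
  proof (cases "c \<le> 1")
    case True
    have "AE x in lebesgue. g x \<le> R (indicator E) x" unfolding g_def
      using True by (intro rearrangementD(3)[OF R V indicator_in_V_fun[OF E]]) (auto simp: indicator_def)
    then have "AE x in lebesgue. x \<in> B \<longrightarrow> x \<in> diamond R E"
      using R1 by eventually_elim (use c in \<open>auto simp: B_def indicator_def of_bool_def split: if_splits\<close>)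
    then show ?thesis using B_meas dE g_shape(2) emeasure_diamond[OF R E]
      by (intro AE_iff_if_AE_imp_emeasure_eq) auto
  next
    case False
    have "AE x in lebesgue. R (indicator E) x \<le> g x" unfolding g_def
      using False by (intro rearrangementD(3)[OF R indicator_in_V_fun[OF E] V]) (auto simp: indicator_def)
    then have "AE x in lebesgue. x \<in> diamond R E \<longrightarrow> x \<in> B"
      using R1 g_shape(1) by eventually_elim (auto simp: indicator_def of_bool_def split: if_splits)
    then have "AE x in lebesgue. x \<in> diamond R E \<longleftrightarrow> x \<in> B"
      using B_meas dE g_shape(2) emeasure_diamond[OF R E] by (intro AE_iff_if_AE_imp_emeasure_eq) auto
    then show ?thesis by eventually_elim auto
  qed
  then show ?thesis using g_shape(1) unfolding g_def[symmetric]
    by eventually_elim (simp add: indicator_def)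
qed

lemma ind_dist_eq_emeasure:
  assumes "A \<in> sets lebesgue" "B \<in> sets lebesgue"
  shows "ind_dist A B = emeasure lebesgue ((A - B) \<union> (B - A))"
proof -
  have "ind_dist A B = (\<integral>\<^sup>+ x. indicator ((A - B) \<union> (B - A)) x \<partial>lebesgue)"
    unfolding ind_dist_def by (intro nn_integral_cong) (auto simp: indicator_def)
  also have "\<dots> = emeasure lebesgue ((A - B) \<union> (B - A))" using assms by (intro nn_integral_indicator) auto
  finally show ?thesis .
qed

lemma ind_dist_AE_cong:
  assumes "AE x in lebesgue. x \<in> A \<longleftrightarrow> x \<in> A'" "AE x in lebesgue. x \<in> B \<longleftrightarrow> x \<in> B'"
  shows "ind_dist A B = ind_dist A' B'"
  unfolding ind_dist_def using assms by (intro nn_integral_cong_AE) (auto simp: indicator_def)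

lemma ind_dist_commute: "ind_dist A B = ind_dist B A"
  unfolding ind_dist_def by (simp add: abs_minus_commute)

lemma ind_dist_triangle:
  assumes "A \<in> sets lebesgue" "B \<in> sets lebesgue" "C \<in> sets lebesgue"
  shows "ind_dist A C \<le> ind_dist A B + ind_dist B C"
proof -
  have "ind_dist A C \<le> (\<integral>\<^sup>+ x. ennreal \<bar>indicator A x - indicator B x :: real\<bar> +
                                  ennreal \<bar>indicator B x - indicator C x :: real\<bar> \<partial>lebesgue)"
    unfolding ind_dist_def by (intro nn_integral_mono) (auto simp: indicator_def)
  also have "\<dots> = ind_dist A B + ind_dist B C"
    unfolding ind_dist_def using assms by (intro nn_integral_add) auto
  finally show ?thesis .
qed

lemma ind_dist_le_emeasure_add:
  assumes "A \<in> sets lebesgue" "B \<in> sets lebesgue"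
  shows "ind_dist A B \<le> emeasure lebesgue A + emeasure lebesgue B"
proof -
  have "ind_dist A B \<le> (\<integral>\<^sup>+ x. indicator A x + indicator B x \<partial>lebesgue)"
    unfolding ind_dist_def by (intro nn_integral_mono) (auto simp: indicator_def)
  also have "\<dots> = emeasure lebesgue A + emeasure lebesgue B"
    using assms by (subst nn_integral_add) auto
  finally show ?thesis .
qed

text \<open>The symmetric difference of \<open>\<diamond>A\<close> and \<open>\<diamond>B\<close> lies a.e. in \<open>\<diamond>(A \<union> B) - \<diamond>(A \<inter> B)\<close>,
  whose measure is that of \<open>(A \<union> B) - (A \<inter> B)\<close>.\<close>

lemma ind_dist_diamond_le:
  assumes R: "rearrangement R" and A: "A \<in> fin_meas_sets" and B: "B \<in> fin_meas_sets"
  shows "ind_dist (diamond R A) (diamond R B) \<le> ind_dist A B"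
proof -
  define C where "C = A \<inter> B"
  define D where "D = A \<union> B"
  have C: "C \<in> fin_meas_sets" and D: "D \<in> fin_meas_sets"
    unfolding C_def D_def using fin_meas_sets_Int[OF A fin_meas_setsD(1)[OF B]] fin_meas_sets_Un[OF A B] .
  have sub: "C \<subseteq> A" "C \<subseteq> B" "A \<subseteq> D" "B \<subseteq> D" "C \<subseteq> D" by (auto simp: C_def D_def)
  have m: "diamond R A \<in> sets lebesgue" "diamond R B \<in> sets lebesgue"
    "diamond R C \<in> sets lebesgue" "diamond R D \<in> sets lebesgue"
    using fin_meas_setsD(1) diamond_in_fin_meas_sets R A B C D by blast+
  have "AE x in lebesgue. x \<in> (diamond R A - diamond R B) \<union> (diamond R B - diamond R A) \<longrightarrow>
      x \<in> diamond R D - diamond R C"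
    using diamond_AE_mono[OF R C A sub(1)] diamond_AE_mono[OF R C B sub(2)]
      diamond_AE_mono[OF R A D sub(3)] diamond_AE_mono[OF R B D sub(4)]
    by eventually_elim blast
  then have "ind_dist (diamond R A) (diamond R B) \<le> emeasure lebesgue (diamond R D - diamond R C)"
    unfolding ind_dist_eq_emeasure[OF m(1,2)] using m by (intro emeasure_mono_AE) auto
  also have "\<dots> = emeasure lebesgue (diamond R D) - emeasure lebesgue (diamond R C)"
    using m diamond_AE_mono[OF R C D sub(5)] fin_meas_setsD(2)[OF diamond_in_fin_meas_sets[OF R D]]
    by (intro emeasure_Diff_AE_subset) auto
  also have "\<dots> = emeasure lebesgue D - emeasure lebesgue C"
    using emeasure_diamond[OF R C] emeasure_diamond[OF R D] by simp
  also have "\<dots> = emeasure lebesgue (D - C)"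
    using fin_meas_setsD[OF C] fin_meas_setsD[OF D] sub(5) by (intro emeasure_Diff[symmetric]) auto
  also have "\<dots> = ind_dist A B"
    unfolding ind_dist_eq_emeasure[OF fin_meas_setsD(1)[OF A] fin_meas_setsD(1)[OF B]]
    by (rule arg_cong[where f="emeasure lebesgue"]) (auto simp: C_def D_def)
  finally show ?thesis .
qed

lemma diamond_superlevel_set_AE_le:
  assumes R: "rearrangement R" and f: "f \<in> V_fun" and c: "c > 0"
  shows "AE x in lebesgue. x \<in> diamond R {x. c < f x} \<longrightarrow> c \<le> R f x"
proof -
  have E: "{x. c < f x} \<in> fin_meas_sets" using superlevel_set_in_fin_meas_sets[OF f c] .
  have V: "(\<lambda>x. c * indicator {x. c < f x} x) \<in> V_fun"
    using scaled_indicator_in_V_fun[OF E] c by simp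
  have "AE x in lebesgue. R (\<lambda>x. c * indicator {x. c < f x} x) x \<le> R f x"
    using V_funD(2)[OF f] by (intro rearrangementD(3)[OF R V f] AE_I2) (auto simp: indicator_def less_imp_le)
  then show ?thesis using rearrangement_scaled_indicator_AE[OF R E c]
    by eventually_elim auto
qed

lemma emeasure_superlevel_set_gap_tendsto_0:
  assumes f: "f \<in> V_fun" and t: "t > 0"
  shows "(\<lambda>n. emeasure lebesgue ({x. t < f x} - {x. t + 1 / real (Suc n) < f x})) \<longlonglongrightarrow> 0"
proof -
  define A where "A = {x. t < f x}"
  define E where "E n = {x. t + 1 / real (Suc n) < f x}" for n
  have A: "A \<in> sets lebesgue" "emeasure lebesgue A < \<infinity>"
    unfolding A_def using fin_meas_setsD superlevel_set_in_fin_meas_sets[OF f t] by auto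
  have E: "E n \<in> sets lebesgue" for n
    unfolding E_def using lebesgue_superlevel_set[OF V_funD(1)[OF f]] .
  have "(\<lambda>n. emeasure lebesgue (A - E n)) \<longlonglongrightarrow> emeasure lebesgue (\<Inter>n. A - E n)"
  proof (rule Lim_emeasure_decseq)
    show "range (\<lambda>n. A - E n) \<subseteq> sets lebesgue" using A E by auto
    show "decseq (\<lambda>n. A - E n)"
    proof (rule decseq_SucI)
      fix n
      have "1 / real (Suc (Suc n)) \<le> 1 / real (Suc n)" by (simp add: frac_le)
      then show "A - E (Suc n) \<subseteq> A - E n" unfolding E_def by auto
    qed
    show "emeasure lebesgue (A - E n) \<noteq> \<infinity>" for n
      using A emeasure_mono[of "A - E n" A lebesgue] by (auto simp: top_unique)
  qed
  moreover have "(\<Inter>n. A - E n) = {}"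
  proof safe
    fix x assume x: "x \<in> (\<Inter>n. A - E n)"
    then have "t < f x" by (auto simp: A_def)
    then obtain n where "inverse (real (Suc n)) < f x - t"
      using reals_Archimedean by (metis diff_gt_0_iff_gt)
    then have "x \<in> E n" by (auto simp: E_def field_simps)
    then show "x \<in> {}" using x by auto
  qed
  ultimately have "(\<lambda>n. emeasure lebesgue (A - E n)) \<longlonglongrightarrow> 0" by (simp only: emeasure_empty)
  then show ?thesis by (simp only: A_def E_def)
qed

text \<open>The inclusion of \<open>\<diamond>{f > t}\<close> in \<open>{R f > t}\<close> is obtained from \<open>\<diamond>{f > s} \<subseteq> {R f \<ge> s}\<close>
  for \<open>s \<down> t\<close> and the contraction property; equality of measures then gives the reverse
  inclusion.\<close>

lemma rearrangement_superlevel_set_AE: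
  assumes R: "rearrangement R" and f: "f \<in> V_fun" and t: "t > 0"
  shows "AE x in lebesgue. t < R f x \<longleftrightarrow> x \<in> diamond R {x. t < f x}"
proof -
  define A where "A = {x. t < f x}"
  define E where "E n = {x. t + 1 / real (Suc n) < f x}" for n
  define Y where "Y = {x. t < R f x}"
  have s: "t + 1 / real (Suc n) > 0" for n using t by (simp add: add_pos_pos)
  have EA: "E n \<subseteq> A" for n
    unfolding E_def A_def by (auto intro: less_trans[of t "t + 1 / real (Suc n)"])
  have A: "A \<in> fin_meas_sets" unfolding A_def using superlevel_set_in_fin_meas_sets[OF f t] .
  have E: "E n \<in> fin_meas_sets" for n unfolding E_def using superlevel_set_in_fin_meas_sets[OF f s] .
  have Y: "Y \<in> sets lebesgue"
    unfolding Y_def using lebesgue_superlevel_set V_funD(1)[OF rearrangementD(1)[OF R f]] by blast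
  have dA: "diamond R A \<in> sets lebesgue" "emeasure lebesgue (diamond R A) < \<infinity>"
    using fin_meas_setsD diamond_in_fin_meas_sets[OF R A] by blast+
  have dE: "diamond R (E n) \<in> sets lebesgue" for n
    using fin_meas_setsD(1)[OF diamond_in_fin_meas_sets[OF R E]] .
  have "AE x in lebesgue. x \<in> diamond R A - Y \<longrightarrow>
      x \<in> (diamond R A - diamond R (E n)) \<union> (diamond R (E n) - diamond R A)" for n
    using diamond_superlevel_set_AE_le[OF R f s[of n]]
    by eventually_elim (use t in \<open>auto simp: Y_def E_def A_def less_le_trans[rotated]\<close>)
  then have "emeasure lebesgue (diamond R A - Y) \<le> ind_dist (diamond R A) (diamond R (E n))" for n
    unfolding ind_dist_eq_emeasure[OF dA(1) dE] using dA dE Y by (intro emeasure_mono_AE) auto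
  also have "ind_dist (diamond R A) (diamond R (E n)) \<le> ind_dist A (E n)" for n
    by (rule ind_dist_diamond_le[OF R A E])
  also have "ind_dist A (E n) = emeasure lebesgue (A - E n)" for n
    unfolding ind_dist_eq_emeasure[OF fin_meas_setsD(1)[OF A] fin_meas_setsD(1)[OF E]]
    using EA[of n] by (intro arg_cong[where f="emeasure lebesgue"]) auto
  finally have "emeasure lebesgue (diamond R A - Y) \<le> 0"
    using emeasure_superlevel_set_gap_tendsto_0[OF f t]
    by (intro tendsto_lowerbound[OF _ always_eventually trivial_limit_sequentially])
      (auto simp: A_def E_def)
  then have "AE x in lebesgue. x \<in> diamond R A \<longrightarrow> x \<in> Y"
    using AE_not_in[of "diamond R A - Y"] dA Y by (auto intro: null_setsI elim: AE_mp)
  moreover have "emeasure lebesgue (diamond R A) = emeasure lebesgue Y"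
    using emeasure_diamond[OF R A] rearrangementD(2)[OF R f, of t] by (simp add: Y_def A_def)
  ultimately have "AE x in lebesgue. x \<in> diamond R A \<longleftrightarrow> x \<in> Y"
    using dA Y by (intro AE_iff_if_AE_imp_emeasure_eq) auto
  then show ?thesis by eventually_elim (auto simp: Y_def A_def)
qed

lemma rearrangement_id: "rearrangement id"
  unfolding rearrangement_def by auto

lemma rearrangement_comp:
  assumes R: "rearrangement R" and Q: "rearrangement Q"
  shows "rearrangement (R \<circ> Q)"
  unfolding rearrangement_def
proof (intro conjI ballI allI impI)
  fix f :: "'a \<Rightarrow> real" assume f: "f \<in> V_fun"
  show "(R \<circ> Q) f \<in> V_fun" using rearrangementD(1)[OF R rearrangementD(1)[OF Q f]] by simp
  show "emeasure lebesgue {x. t < (R \<circ> Q) f x} = emeasure lebesgue {x. t < f x}" for t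
    using rearrangementD(2)[OF R rearrangementD(1)[OF Q f]] rearrangementD(2)[OF Q f] by simp
  fix g :: "'a \<Rightarrow> real" assume g: "g \<in> V_fun" and fg: "AE x in lebesgue. f x \<le> g x"
  show "AE x in lebesgue. (R \<circ> Q) f x \<le> (R \<circ> Q) g x"
    using rearrangementD(3)[OF R rearrangementD(1)[OF Q f] rearrangementD(1)[OF Q g]
        rearrangementD(3)[OF Q f g fg]]
    by simp
qed

lemma rearrangement_seqcomp: "(\<And>k. rearrangement (S k)) \<Longrightarrow> rearrangement (seqcomp S k)"
  by (induction k) (auto intro: rearrangement_comp rearrangement_id)

lemma diamond_comp_AE:
  assumes R: "rearrangement R" and Q: "rearrangement Q" and A: "A \<in> fin_meas_sets"
  shows "AE x in lebesgue. x \<in> diamond (R \<circ> Q) A \<longleftrightarrow> x \<in> diamond R (diamond Q A)"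
proof -
  have "AE x in lebesgue. R (Q (indicator A)) x = R (indicator (diamond Q A)) x"
    using rearrangement_indicator_AE[OF Q A]
    by (rule rearrangement_AE_cong[OF R rearrangementD(1)[OF Q indicator_in_V_fun[OF A]]
          indicator_in_V_fun[OF diamond_in_fin_meas_sets[OF Q A]]])
  then show ?thesis by eventually_elim (simp add: diamond_def)
qed

lemma diamond_id: "diamond id A = A"
  unfolding diamond_def by (auto simp: indicator_def)

lemma diamond_seqcomp_AE:
  assumes S: "\<And>k. rearrangement (S k)" and A: "A \<in> fin_meas_sets"
  shows "AE x in lebesgue. x \<in> diamond (seqcomp S k) A \<longleftrightarrow> x \<in> seqcomp (\<lambda>j. diamond (S j)) k A"
    and "seqcomp (\<lambda>j. diamond (S j)) k A \<in> fin_meas_sets"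
proof (induction k)
  case 0
  show "AE x in lebesgue. x \<in> diamond (seqcomp S 0) A \<longleftrightarrow> x \<in> seqcomp (\<lambda>j. diamond (S j)) 0 A"
    by (simp add: diamond_id)
  show "seqcomp (\<lambda>j. diamond (S j)) 0 A \<in> fin_meas_sets" using A by simp
next
  case (Suc k)
  note Sk = rearrangement_seqcomp[of S k, OF S]
  have "AE x in lebesgue. x \<in> diamond (S k \<circ> seqcomp S k) A \<longleftrightarrow> x \<in> diamond (S k) (diamond (seqcomp S k) A)"
    by (rule diamond_comp_AE[OF S Sk A])
  moreover have "AE x in lebesgue. x \<in> diamond (S k) (diamond (seqcomp S k) A) \<longleftrightarrow>
      x \<in> diamond (S k) (seqcomp (\<lambda>j. diamond (S j)) k A)"
    using Suc.IH by (intro diamond_AE_cong[OF S diamond_in_fin_meas_sets[OF Sk A]])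
  ultimately show "AE x in lebesgue. x \<in> diamond (seqcomp S (Suc k)) A \<longleftrightarrow>
      x \<in> seqcomp (\<lambda>j. diamond (S j)) (Suc k) A"
    by eventually_elim simp
  show "seqcomp (\<lambda>j. diamond (S j)) (Suc k) A \<in> fin_meas_sets"
    using diamond_in_fin_meas_sets[OF S] Suc.IH by simp
qed

definition nonexpansive_set_map :: "('a::euclidean_space set \<Rightarrow> 'a set) \<Rightarrow> bool" where
  "nonexpansive_set_map D \<longleftrightarrow> (\<forall>A\<in>fin_meas_sets. D A \<in> fin_meas_sets) \<and>
     (\<forall>A\<in>fin_meas_sets. \<forall>B\<in>fin_meas_sets. ind_dist (D A) (D B) \<le> ind_dist A B)"

lemma nonexpansive_set_map_diamond: "rearrangement R \<Longrightarrow> nonexpansive_set_map (diamond R)"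
  unfolding nonexpansive_set_map_def using diamond_in_fin_meas_sets ind_dist_diamond_le by blast

lemma nonexpansive_set_map_comp:
  "nonexpansive_set_map D \<Longrightarrow> nonexpansive_set_map D' \<Longrightarrow> nonexpansive_set_map (D \<circ> D')"
  unfolding nonexpansive_set_map_def by (metis comp_apply order_trans)

lemma nonexpansive_set_map_seqcomp:
  "(\<And>k. nonexpansive_set_map (S k)) \<Longrightarrow> nonexpansive_set_map (seqcomp S k)"
  by (induction k) (auto simp: nonexpansive_set_map_comp, simp add: nonexpansive_set_map_def)

lemma ind_dist_le_via_nonexpansive:
  assumes D: "nonexpansive_set_map D" and D': "nonexpansive_set_map D'"
    and A: "A \<in> fin_meas_sets" and K: "K \<in> fin_meas_sets"
  shows "ind_dist (D A) (D' A) \<le> ind_dist A K + ind_dist (D K) (D' K) + ind_dist A K"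
proof -
  have f: "D A \<in> sets lebesgue" "D K \<in> sets lebesgue" "D' A \<in> sets lebesgue" "D' K \<in> sets lebesgue"
    using D D' A K fin_meas_setsD(1) unfolding nonexpansive_set_map_def by blast+
  have "ind_dist (D A) (D' A) \<le> ind_dist (D A) (D K) + ind_dist (D K) (D' A)"
    using f by (intro ind_dist_triangle)
  also have "ind_dist (D K) (D' A) \<le> ind_dist (D K) (D' K) + ind_dist (D' K) (D' A)"
    using f by (intro ind_dist_triangle)
  also have "ind_dist (D A) (D K) \<le> ind_dist A K"
    using D A K unfolding nonexpansive_set_map_def by auto
  also have "ind_dist (D' K) (D' A) \<le> ind_dist A K"
    using D' A K unfolding nonexpansive_set_map_def by (metis ind_dist_commute)
  finally show ?thesis by (simp add: add_mono add.assoc)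
qed

lemma emeasure_Diff_cball_tendsto_0:
  assumes A: "A \<in> fin_meas_sets"
  shows "(\<lambda>n. emeasure lebesgue (A - cball 0 (real n))) \<longlonglongrightarrow> 0"
proof -
  have Am: "A \<in> sets lebesgue" "emeasure lebesgue A < \<infinity>" using fin_meas_setsD[OF A] by auto
  have "(\<lambda>n. emeasure lebesgue (A - cball 0 (real n))) \<longlonglongrightarrow> emeasure lebesgue (\<Inter>n. A - cball (0::'a) (real n))"
  proof (rule Lim_emeasure_decseq)
    show "range (\<lambda>n. A - cball (0::'a) (real n)) \<subseteq> sets lebesgue" using Am by auto
    show "decseq (\<lambda>n. A - cball (0::'a) (real n))"
      by (rule decseq_SucI) (auto simp: mem_cball_0)
    show "emeasure lebesgue (A - cball 0 (real n)) \<noteq> \<infinity>" for n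
      using Am emeasure_mono[of "A - cball 0 (real n)" A lebesgue] by (auto simp: top_unique)
  qed
  moreover have "(\<Inter>n. A - cball (0::'a) (real n)) = {}"
    by (auto simp: mem_cball_0) (meson real_arch_simple)
  ultimately show ?thesis by (simp only: emeasure_empty)
qed

lemma fin_meas_set_approx_compact:
  assumes A: "A \<in> fin_meas_sets" and e: "e > 0"
  obtains K where "K \<in> compact_sets" "ind_dist A K < ennreal e"
proof -
  have Am: "A \<in> sets lebesgue" "emeasure lebesgue A < \<infinity>" using fin_meas_setsD[OF A] by auto
  obtain F where F: "closed F" "F \<subseteq> A" "A - F \<in> lmeasurable" "emeasure lebesgue (A - F) < ennreal (e/2)"
    using sets_lebesgue_inner_closed[OF Am(1), of "e/2"] e by auto
  have "eventually (\<lambda>n. emeasure lebesgue (A - cball 0 (real n)) < ennreal (e/2)) sequentially"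
    using e by (intro order_tendstoD(2)[OF emeasure_Diff_cball_tendsto_0[OF A]]) auto
  then obtain n where n: "emeasure lebesgue (A - cball 0 (real n)) < ennreal (e/2)"
    by (auto simp: eventually_sequentially)
  \<comment> \<open>the point 0 only makes K nonempty and does not change the distance\<close>
  define K where "K = insert 0 (F \<inter> cball 0 (real n))"
  have K: "K \<in> compact_sets" unfolding K_def compact_sets_def
    using F(1) by (simp add: closed_Int_compact Int_commute)
  have null0: "{0::'a} \<in> null_sets lebesgue"
    using emeasure_lborel_singleton[of "0::'a"] by (auto intro: null_setsI simp: emeasure_completion)
  have m: "A - F \<in> sets lebesgue" "A - cball 0 (real n) \<in> sets lebesgue"
    using F(3) Am by (auto simp: fmeasurable_def)
  have "ind_dist A K = emeasure lebesgue ((A - K) \<union> (K - A))"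
    using K compact_sets_subset_fin_meas_sets fin_meas_setsD(1) Am by (intro ind_dist_eq_emeasure) auto
  also have "\<dots> \<le> emeasure lebesgue ((A - F) \<union> (A - cball 0 (real n)) \<union> {0})"
    using F(2) sets.Un[OF sets.Un[OF m] null_setsD2[OF null0]] by (intro emeasure_mono) (auto simp: K_def)
  also have "\<dots> \<le> emeasure lebesgue (A - F) + emeasure lebesgue (A - cball 0 (real n)) + emeasure lebesgue {0::'a}"
    using m null0 by (intro order_trans[OF emeasure_subadditive] add_mono emeasure_subadditive) auto
  also have "\<dots> < ennreal (e/2 + e/2)"
    using add_mono_ennreal[OF F(4) n] null_setsD1[OF null0] by simp
  finally show ?thesis using K that by simp
qed

lemma tendsto_ind_dist_fin_meas_if_compact:
  assumes D: "\<And>k. nonexpansive_set_map (D k)" and D': "nonexpansive_set_map D'"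
    and conv: "\<forall>K\<in>compact_sets. (\<lambda>k. ind_dist (D k K) (D' K)) \<longlonglongrightarrow> 0"
    and A: "A \<in> fin_meas_sets"
  shows "(\<lambda>k. ind_dist (D k A) (D' A)) \<longlonglongrightarrow> 0"
proof -
  have "limsup (\<lambda>k. ind_dist (D k A) (D' A)) \<le> 0 + ennreal e" if e: "e > 0" for e
  proof -
    obtain K where K: "K \<in> compact_sets" "ind_dist A K < ennreal (e/2)"
      using fin_meas_set_approx_compact[OF A, of "e/2"] e by auto
    have "limsup (\<lambda>k. ind_dist (D k A) (D' A)) \<le>
        limsup (\<lambda>k. ind_dist A K + ind_dist (D k K) (D' K) + ind_dist A K)"
      using K(1) compact_sets_subset_fin_meas_sets
      by (intro Limsup_mono always_eventually allI ind_dist_le_via_nonexpansive[OF D D' A]) auto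
    also have "\<dots> = ind_dist A K + 0 + ind_dist A K"
      using conv K(1) by (intro lim_imp_Limsup tendsto_add tendsto_const) auto
    also have "\<dots> \<le> ennreal (e/2) + ennreal (e/2)" using K(2) by (simp add: add_mono)
    also have "\<dots> = 0 + ennreal e" using e by (simp flip: ennreal_plus)
    finally show ?thesis .
  qed
  then have "limsup (\<lambda>k. ind_dist (D k A) (D' A)) \<le> 0"
    by (rule ennreal_le_epsilon)
  then show ?thesis by (intro tendsto_0_if_Limsup_eq_0_ennreal) simp
qed

lemma ex_seq_tendsto_0_if_arbitrarily_small:
  fixes d :: "'b \<Rightarrow> ennreal"
  assumes "\<And>e. e > 0 \<Longrightarrow> \<exists>G\<in>\<D>. d G < ennreal e"
  shows "\<exists>G. (\<forall>k. G k \<in> \<D>) \<and> (\<lambda>k. d (G k)) \<longlonglongrightarrow> 0"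
proof -
  obtain G where G: "\<And>k. G k \<in> \<D>" "\<And>k. d (G k) < ennreal (inverse (real (Suc k)))"
    using assms[of "inverse (real (Suc _))"] by (metis inverse_positive_iff_positive of_nat_0_less_iff zero_less_Suc)
  have lim: "(\<lambda>k. ennreal (inverse (real (Suc k)))) \<longlonglongrightarrow> 0"
    using LIMSEQ_inverse_real_of_nat by (subst ennreal_tendsto_0_iff) auto
  have "(\<lambda>k. d (G k)) \<longlonglongrightarrow> 0"
    by (rule tendsto_sandwich[OF _ _ tendsto_const lim]) (simp_all add: less_imp_le[OF G(2)] del: of_nat_Suc)
  then show ?thesis using G(1) by blast
qed

lemma ex_tendsto_ind_dist_fin_meas_if_compact:
  assumes D: "\<forall>D\<in>\<D>. nonexpansive_set_map D" and D': "nonexpansive_set_map D'"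
    and conv: "\<forall>K\<in>compact_sets. \<exists>G. (\<forall>k. G k \<in> \<D>) \<and> (\<lambda>k. ind_dist (G k K) (D' K)) \<longlonglongrightarrow> 0"
    and A: "A \<in> fin_meas_sets"
  shows "\<exists>G. (\<forall>k. G k \<in> \<D>) \<and> (\<lambda>k. ind_dist (G k A) (D' A)) \<longlonglongrightarrow> 0"
proof (rule ex_seq_tendsto_0_if_arbitrarily_small)
  fix e :: real assume e: "e > 0"
  obtain K where K: "K \<in> compact_sets" "ind_dist A K < ennreal (e/3)"
    using fin_meas_set_approx_compact[OF A, of "e/3"] e by auto
  obtain G where G: "\<forall>k. G k \<in> \<D>" "(\<lambda>k. ind_dist (G k K) (D' K)) \<longlonglongrightarrow> 0"
    using conv K(1) by blast
  obtain k where k: "ind_dist (G k K) (D' K) < ennreal (e/3)"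
    using order_tendstoD(2)[OF G(2), of "ennreal (e/3)"] e by (auto simp: eventually_sequentially)
  have "ind_dist (G k A) (D' A) \<le> ind_dist A K + ind_dist (G k K) (D' K) + ind_dist A K"
    using D G(1) K(1) compact_sets_subset_fin_meas_sets
    by (intro ind_dist_le_via_nonexpansive[OF _ D' A]) auto
  also have "\<dots> < ennreal (e/3 + e/3 + e/3)"
    by (intro add_mono_ennreal K(2) k)
  finally show "\<exists>H\<in>\<D>. ind_dist (H A) (D' A) < ennreal e" using G(1) by auto
qed

lemma powr_superadditive:
  fixes u v p :: real
  assumes "0 \<le> u" "0 \<le> v" "1 \<le> p"
  shows "u powr p + v powr p \<le> (u + v) powr p"
proof (cases "u + v = 0")
  case True
  then have "u = 0" "v = 0" using assms by auto
  then show ?thesis by simp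
next
  case False
  define s where "s = u + v"
  have s: "s > 0" using False assms by (simp add: s_def)
  \<comment> \<open>\<open>w\<^sup>p = s\<^sup>p (w/s)\<^sup>p \<le> s\<^sup>p (w/s)\<close> since \<open>w/s \<le> 1\<close>\<close>
  have key: "w powr p \<le> s powr p * (w / s)" if w: "0 \<le> w" "w \<le> s" for w
  proof -
    have "w powr p = s powr p * (w / s) powr p" using s w by (simp add: powr_mult[symmetric])
    also have "(w / s) powr p \<le> (w / s) powr 1"
      using w s assms(3) by (intro powr_mono') auto
    finally show ?thesis using w s by (simp add: mult_left_mono)
  qed
  have "u powr p + v powr p \<le> s powr p * (u / s) + s powr p * (v / s)"
    using key[of u] key[of v] assms by (auto simp: s_def intro: add_mono)
  also have "\<dots> = s powr p" using s by (simp add: s_def add_divide_distrib[symmetric] ring_distribs[symmetric])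
  finally show ?thesis by (simp add: s_def)
qed

lemma abs_diff_powr_le:
  fixes a b p :: real
  assumes "0 \<le> a" "0 \<le> b" "1 \<le> p"
  shows "\<bar>a - b\<bar> powr p \<le> \<bar>a powr p - b powr p\<bar>"
proof -
  have *: "(x - y) powr p \<le> x powr p - y powr p" if "0 \<le> y" "y \<le> x" for x y :: real
    using powr_superadditive[of "x - y" y p] that assms(3) by simp
  show ?thesis
  proof (cases "b \<le> a")
    case True
    then show ?thesis using *[of b a] assms powr_mono2[of p b a] by simp
  next
    case False
    then show ?thesis using *[of a b] assms powr_mono2[of p a b] by simp
  qed
qed

lemma superlevel_set_powr:
  fixes g :: "'b \<Rightarrow> real"
  assumes "0 < t" "0 < p" "\<And>x. 0 \<le> g x"
  shows "{x. t < g x powr p} = {x. t powr (1/p) < g x}"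
proof -
  have "t < y powr p \<longleftrightarrow> t powr (1/p) < y" if y: "0 \<le> y" for y :: real
  proof -
    have "t < y powr p \<longleftrightarrow> (t powr (1/p)) powr p < y powr p"
      using assms by (simp add: powr_powr)
    also have "\<dots> \<longleftrightarrow> t powr (1/p) < y"
      using assms y powr_less_mono2[of p "t powr (1/p)" y] powr_mono2[of p y "t powr (1/p)"]
      by (auto simp: not_less[symmetric])
    finally show ?thesis .
  qed
  then show ?thesis using assms(3) by auto
qed

lemma Lp_dist_pow_le_integral_ind_dist:
  fixes a b :: "'a::euclidean_space \<Rightarrow> real"
  assumes [measurable]: "a \<in> borel_measurable lebesgue" "b \<in> borel_measurable lebesgue"
    and nonneg: "\<And>x. 0 \<le> a x" "\<And>x. 0 \<le> b x" and p: "1 \<le> p"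
  shows "Lp_dist_pow p a b \<le> (\<integral>\<^sup>+t. ind_dist {x. t < a x powr p} {x. t < b x powr p} \<partial>lborel)"
proof -
  have "Lp_dist_pow p a b \<le> (\<integral>\<^sup>+x. (\<integral>\<^sup>+t. ennreal \<bar>indicator {x. t < a x powr p} x -
      indicator {x. t < b x powr p} x :: real\<bar> \<partial>lborel) \<partial>lebesgue)"
    unfolding Lp_dist_pow_def
  proof (intro nn_integral_mono)
    fix x
    \<comment> \<open>the inner integral is the length of the interval between \<open>a x ^ p\<close> and \<open>b x ^ p\<close>\<close>
    have "(\<integral>\<^sup>+t. ennreal \<bar>indicator {x. t < a x powr p} x - indicator {x. t < b x powr p} x :: real\<bar> \<partial>lborel)
        = (\<integral>\<^sup>+t. indicator {min (a x powr p) (b x powr p) ..< max (a x powr p) (b x powr p)} t \<partial>lborel)"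
      by (intro nn_integral_cong) (auto simp: indicator_def)
    also have "\<dots> = ennreal \<bar>a x powr p - b x powr p\<bar>"
      by (simp add: max_def min_def)
    finally show "ennreal (\<bar>a x - b x\<bar> powr p) \<le> (\<integral>\<^sup>+t. ennreal \<bar>indicator {x. t < a x powr p} x -
        indicator {x. t < b x powr p} x :: real\<bar> \<partial>lborel)"
      using abs_diff_powr_le[OF nonneg(1)[of x] nonneg(2)[of x] p] by (simp add: ennreal_leI)
  qed
  also have "\<dots> = (\<integral>\<^sup>+t. ind_dist {x. t < a x powr p} {x. t < b x powr p} \<partial>lborel)"
    unfolding ind_dist_def by (rule lebesgue_lborel.Fubini'[symmetric]) measurable
  finally show ?thesis .
qed

lemma nn_integral_emeasure_superlevel_set_powr:
  fixes f :: "'a::euclidean_space \<Rightarrow> real"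
  assumes [measurable]: "f \<in> borel_measurable lebesgue"
  shows "(\<integral>\<^sup>+t. emeasure lebesgue {x. t < f x powr p} * indicator {0<..} t \<partial>lborel)
     = (\<integral>\<^sup>+x. ennreal (f x powr p) \<partial>lebesgue)"
proof -
  have "(\<integral>\<^sup>+t. emeasure lebesgue {x. t < f x powr p} * indicator {0<..} t \<partial>lborel)
      = (\<integral>\<^sup>+t. (\<integral>\<^sup>+x. indicator {x. t < f x powr p} x * indicator {0<..} t \<partial>lebesgue) \<partial>lborel)"
    using lebesgue_superlevel_set[of "\<lambda>x. f x powr p"]
    by (intro nn_integral_cong) (simp add: nn_integral_multc)
  also have "\<dots> = (\<integral>\<^sup>+x. (\<integral>\<^sup>+t. indicator {x. t < f x powr p} x * indicator {0<..} t \<partial>lborel) \<partial>lebesgue)"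
    by (rule lebesgue_lborel.Fubini') measurable
  also have "\<dots> = (\<integral>\<^sup>+x. (\<integral>\<^sup>+t. indicator {0<..<f x powr p} t \<partial>lborel) \<partial>lebesgue)"
    by (intro nn_integral_cong) (auto simp: indicator_def)
  finally show ?thesis by simp
qed

lemma Lp_plus_subset_V_fun:
  assumes p: "0 < p"
  shows "Lp_plus p \<subseteq> V_fun"
proof
  fix f :: "'a \<Rightarrow> real" assume "f \<in> Lp_plus p"
  then have fm: "f \<in> borel_measurable lebesgue" and nonneg: "\<And>x. 0 \<le> f x"
    and fin: "(\<integral>\<^sup>+ x. ennreal (\<bar>f x\<bar> powr p) \<partial>lebesgue) < \<infinity>"
    by (auto simp: Lp_plus_def)
  \<comment> \<open>Chebyshev's inequality\<close>
  have "emeasure lebesgue {x. t < f x} < \<infinity>" if t: "t > 0" for t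
  proof -
    have "ennreal (t powr p) * emeasure lebesgue {x. t < f x} =
        (\<integral>\<^sup>+x. ennreal (t powr p) * indicator {x. t < f x} x \<partial>lebesgue)"
      using lebesgue_superlevel_set[OF fm] by (simp add: nn_integral_cmult_indicator)
    also have "\<dots> \<le> (\<integral>\<^sup>+ x. ennreal (\<bar>f x\<bar> powr p) \<partial>lebesgue)"
      using t nonneg p by (intro nn_integral_mono) (auto simp: indicator_def intro!: ennreal_leI powr_mono2)
    finally have "ennreal (t powr p) * emeasure lebesgue {x. t < f x} < \<infinity>"
      using fin by (rule le_less_trans)
    then show ?thesis using t by (auto simp: ennreal_mult_less_top)
  qed
  then show "f \<in> V_fun" using fm nonneg unfolding V_fun_def by auto
qed

lemma indicator_in_Lp_plus:
  assumes A: "A \<in> fin_meas_sets" and p: "0 < p"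
  shows "indicator A \<in> Lp_plus p"
proof -
  have "(\<integral>\<^sup>+ x. ennreal (\<bar>indicator A x :: real\<bar> powr p) \<partial>lebesgue) = (\<integral>\<^sup>+ x. indicator A x \<partial>lebesgue)"
    using p by (intro nn_integral_cong) (auto simp: indicator_def)
  also have "\<dots> = emeasure lebesgue A" using fin_meas_setsD(1)[OF A] by simp
  finally show ?thesis using fin_meas_setsD[OF A] unfolding Lp_plus_def by (auto simp: indicator_def)
qed

lemma Lp_dist_pow_indicator:
  assumes R: "rearrangement R" and Q: "rearrangement Q" and A: "A \<in> fin_meas_sets" and p: "0 < p"
  shows "Lp_dist_pow p (R (indicator A)) (Q (indicator A)) = ind_dist (diamond R A) (diamond Q A)"
  unfolding Lp_dist_pow_def ind_dist_def
  using rearrangement_indicator_AE[OF R A] rearrangement_indicator_AE[OF Q A]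
  by (intro nn_integral_cong_AE, eventually_elim) (use p in \<open>auto simp: indicator_def\<close>)

lemma ind_dist_superlevel_sets_powr_neg:
  fixes g h :: "'a::euclidean_space \<Rightarrow> real" and p t :: real
  assumes "t < 0"
  shows "ind_dist {x. t < g x powr p} {x. t < h x powr p} = 0"
proof -
  have "{x. t < u x powr p} = UNIV" for u :: "'a \<Rightarrow> real"
    using assms by (auto intro: less_le_trans[OF _ powr_ge_zero])
  then show ?thesis by (simp add: ind_dist_def)
qed

lemma ind_dist_superlevel_sets_powr_le:
  assumes R: "rearrangement R" and Q: "rearrangement Q" and f: "f \<in> V_fun"
    and p: "0 < p" and t: "0 < t"
  shows "ind_dist {x. t < R f x powr p} {x. t < Q f x powr p} \<le> 2 * emeasure lebesgue {x. t < f x powr p}"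
proof -
  have level: "emeasure lebesgue {x. t < S f x powr p} = emeasure lebesgue {x. t < f x powr p}"
    if S: "rearrangement S" for S
    using rearrangementD(2)[OF S f, of "t powr (1/p)"]
    by (simp add: superlevel_set_powr[OF t p] V_funD(2)[OF f] V_funD(2)[OF rearrangementD(1)[OF S f]])
  have "{x. t < S f x powr p} \<in> sets lebesgue" if S: "rearrangement S" for S
    using V_funD(1)[OF rearrangementD(1)[OF S f]] by (intro lebesgue_superlevel_set) measurable
  then have "ind_dist {x. t < R f x powr p} {x. t < Q f x powr p} \<le>
      emeasure lebesgue {x. t < R f x powr p} + emeasure lebesgue {x. t < Q f x powr p}"
    using R Q by (intro ind_dist_le_emeasure_add)
  then show ?thesis using level[OF R] level[OF Q] by (simp add: mult_2)
qed

lemma ind_dist_superlevel_sets_powr_eq: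
  assumes R: "rearrangement R" and Q: "rearrangement Q" and f: "f \<in> V_fun"
    and p: "0 < p" and t: "0 < t"
  shows "ind_dist {x. t < R f x powr p} {x. t < Q f x powr p} =
    ind_dist (diamond R {x. t powr (1/p) < f x}) (diamond Q {x. t powr (1/p) < f x})"
proof -
  have s: "t powr (1/p) > 0" using t by simp
  have "ind_dist {x. t < R f x powr p} {x. t < Q f x powr p} =
      ind_dist {x. t powr (1/p) < R f x} {x. t powr (1/p) < Q f x}"
    using V_funD(2)[OF rearrangementD(1)[OF R f]] V_funD(2)[OF rearrangementD(1)[OF Q f]]
    by (simp add: superlevel_set_powr[OF t p])
  also have "\<dots> = ind_dist (diamond R {x. t powr (1/p) < f x}) (diamond Q {x. t powr (1/p) < f x})"
    using rearrangement_superlevel_set_AE[OF R f s] rearrangement_superlevel_set_AE[OF Q f s]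
    by (intro ind_dist_AE_cong) simp_all
  finally show ?thesis .
qed

lemma Lp_tendsto_if_diamond_tendsto:
  assumes R: "\<And>k. rearrangement (R k)" and T: "rearrangement T" and p: "1 \<le> p"
    and f: "f \<in> Lp_plus p"
    and conv: "\<forall>A\<in>fin_meas_sets. (\<lambda>k. ind_dist (diamond (R k) A) (diamond T A)) \<longlonglongrightarrow> 0"
  shows "(\<lambda>k. Lp_dist_pow p (R k f) (T f)) \<longlonglongrightarrow> 0"
proof -
  have p0: "0 < p" using p by simp
  have fV: "f \<in> V_fun" using Lp_plus_subset_V_fun[OF p0] f by blast
  have [measurable]: "f \<in> borel_measurable lebesgue" "T f \<in> borel_measurable lebesgue"
    "R k f \<in> borel_measurable lebesgue" for k
    using V_funD(1) fV rearrangementD(1)[OF T fV] rearrangementD(1)[OF R fV] by blast+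
  have nonneg: "\<And>x. 0 \<le> T f x" "\<And>k x. 0 \<le> R k f x"
    using V_funD(2) rearrangementD(1)[OF T fV] rearrangementD(1)[OF R fV] by blast+
  define G where "G k t = ind_dist {x. t < R k f x powr p} {x. t < T f x powr p}" for k t
  define w where "w t = 2 * (emeasure lebesgue {x. t < f x powr p} * indicator {0<..} t)" for t
  have G_meas: "G k \<in> borel_measurable lborel" for k
    unfolding G_def ind_dist_def by measurable
  have w_meas: "w \<in> borel_measurable lborel"
    unfolding w_def by measurable
  have bound: "AE t in lborel. G k t \<le> w t" for k
    using AE_lborel_singleton[of 0]
    by eventually_elim (auto simp: G_def w_def neq_iff ind_dist_superlevel_sets_powr_neg
        ind_dist_superlevel_sets_powr_le[OF R T fV p0])
  have w_fin: "(\<integral>\<^sup>+t. w t \<partial>lborel) < \<infinity>"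
  proof -
    have "(\<integral>\<^sup>+t. w t \<partial>lborel) = 2 * (\<integral>\<^sup>+x. ennreal (\<bar>f x\<bar> powr p) \<partial>lebesgue)"
      unfolding w_def using V_funD(2)[OF fV]
      by (simp add: nn_integral_cmult nn_integral_emeasure_superlevel_set_powr)
    then show ?thesis using f V_funD(2)[OF fV] by (simp add: Lp_plus_def ennreal_mult_less_top)
  qed
  have G_lim: "AE t in lborel. (\<lambda>k. G k t) \<longlonglongrightarrow> 0"
    using AE_lborel_singleton[of 0]
    by eventually_elim (auto simp: G_def neq_iff ind_dist_superlevel_sets_powr_neg
        ind_dist_superlevel_sets_powr_eq[OF R T fV p0] conv superlevel_set_in_fin_meas_sets[OF fV])
  have lim: "(\<lambda>k. \<integral>\<^sup>+t. G k t \<partial>lborel) \<longlonglongrightarrow> 0"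
    using nn_integral_dominated_convergence[where u'="\<lambda>_. 0",
        OF G_meas measurable_const w_meas bound w_fin G_lim]
    by simp
  have le: "Lp_dist_pow p (R k f) (T f) \<le> (\<integral>\<^sup>+t. G k t \<partial>lborel)" for k
    unfolding G_def by (rule Lp_dist_pow_le_integral_ind_dist) (use nonneg p in auto)
  show ?thesis
    by (rule tendsto_sandwich[OF _ _ tendsto_const lim]) (simp_all add: le)
qed

lemma Lp_tendsto_iff_diamond_tendsto:
  assumes R: "\<And>k. rearrangement (R k)" and T: "rearrangement T" and p: "1 \<le> p"
  shows "(\<forall>f\<in>Lp_plus p. (\<lambda>k. Lp_dist_pow p (R k f) (T f)) \<longlonglongrightarrow> 0) \<longleftrightarrow>
    (\<forall>A\<in>fin_meas_sets. (\<lambda>k. ind_dist (diamond (R k) A) (diamond T A)) \<longlonglongrightarrow> 0)"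
proof
  assume Lp: "\<forall>f\<in>Lp_plus p. (\<lambda>k. Lp_dist_pow p (R k f) (T f)) \<longlonglongrightarrow> 0"
  have p0: "0 < p" using p by simp
  show "\<forall>A\<in>fin_meas_sets. (\<lambda>k. ind_dist (diamond (R k) A) (diamond T A)) \<longlonglongrightarrow> 0"
  proof
    fix A :: "'a set" assume A: "A \<in> fin_meas_sets"
    have "(\<lambda>k. Lp_dist_pow p (R k (indicator A)) (T (indicator A))) \<longlonglongrightarrow> 0"
      using Lp indicator_in_Lp_plus[OF A p0] by blast
    then show "(\<lambda>k. ind_dist (diamond (R k) A) (diamond T A)) \<longlonglongrightarrow> 0"
      unfolding Lp_dist_pow_indicator[OF R T A p0] .
  qed
qed (use Lp_tendsto_if_diamond_tendsto[where R=R, OF R T p] in blast)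

lemma ex_seq_in_image_iff:
  "(\<exists>D. (\<forall>k. D k \<in> f ` W) \<and> P D) \<longleftrightarrow> (\<exists>S. (\<forall>k. S k \<in> W) \<and> P (\<lambda>k. f (S k)))"
proof
  assume "\<exists>D. (\<forall>k. D k \<in> f ` W) \<and> P D"
  then obtain D where D: "\<forall>k. D k \<in> f ` W" "P D" by blast
  then have "\<forall>k. \<exists>w. w \<in> W \<and> D k = f w" by blast
  then obtain S where S: "\<forall>k. S k \<in> W \<and> D k = f (S k)" by (rule choice[THEN exE])
  then have "D = (\<lambda>k. f (S k))" by auto
  then show "\<exists>S. (\<forall>k. S k \<in> W) \<and> P (\<lambda>k. f (S k))" using S D(2) by auto
next
  assume "\<exists>S. (\<forall>k. S k \<in> W) \<and> P (\<lambda>k. f (S k))"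
  then obtain S where "\<forall>k. S k \<in> W" "P (\<lambda>k. f (S k))" by blast
  then show "\<exists>D. (\<forall>k. D k \<in> f ` W) \<and> P D" by (intro exI[of _ "\<lambda>k. f (S k)"]) auto
qed

lemma ind_dist_seqcomp_diamond:
  assumes "\<And>k. rearrangement (S k)" "A \<in> fin_meas_sets"
  shows "ind_dist (seqcomp (\<lambda>j. diamond (S j)) k A) B = ind_dist (diamond (seqcomp S k) A) B"
  using diamond_seqcomp_AE(1)[of S A k, OF assms] by (intro ind_dist_AE_cong) auto

lemma approximable_Lp_iff_diamond:
  assumes p: "1 \<le> p" and T: "rearrangement T" and W: "\<forall>W\<in>\<W>. rearrangement W"
  shows "approximable (Lp_dist_pow p) (Lp_plus p) \<W> T \<longleftrightarrow>
    approximable ind_dist fin_meas_sets (diamond ` \<W>) (diamond T)"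
proof -
  have "(\<forall>f\<in>Lp_plus p. (\<lambda>k. Lp_dist_pow p (S k f) (T f)) \<longlonglongrightarrow> 0) \<longleftrightarrow>
      (\<forall>A\<in>fin_meas_sets. (\<lambda>k. ind_dist (diamond (S k) A) (diamond T A)) \<longlonglongrightarrow> 0)"
    if "\<forall>k. S k \<in> \<W>" for S
    using that W by (intro Lp_tendsto_iff_diamond_tendsto[OF _ T p]) blast
  then show ?thesis unfolding approximable_def ex_seq_in_image_iff by (rule ex_cong)
qed

lemma seq_approximable_Lp_iff_diamond:
  assumes p: "1 \<le> p" and T: "rearrangement T" and W: "\<forall>W\<in>\<W>. rearrangement W"
  shows "seq_approximable (Lp_dist_pow p) (Lp_plus p) \<W> T \<longleftrightarrow>
    seq_approximable ind_dist fin_meas_sets (diamond ` \<W>) (diamond T)"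
proof -
  have "(\<forall>f\<in>Lp_plus p. (\<lambda>k. Lp_dist_pow p (seqcomp S (Suc k) f) (T f)) \<longlonglongrightarrow> 0) \<longleftrightarrow>
      (\<forall>A\<in>fin_meas_sets. (\<lambda>k. ind_dist (seqcomp (\<lambda>j. diamond (S j)) (Suc k) A) (diamond T A)) \<longlonglongrightarrow> 0)"
    if "\<forall>k. S k \<in> \<W>" for S
  proof -
    have S: "\<And>k. rearrangement (S k)" using that W by blast
    have "(\<forall>A\<in>fin_meas_sets.
        (\<lambda>k. ind_dist (seqcomp (\<lambda>j. diamond (S j)) (Suc k) A) (diamond T A)) \<longlonglongrightarrow> 0) \<longleftrightarrow>
      (\<forall>A\<in>fin_meas_sets. (\<lambda>k. ind_dist (diamond (seqcomp S (Suc k)) A) (diamond T A)) \<longlonglongrightarrow> 0)"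
      by (simp only: ind_dist_seqcomp_diamond[OF S] cong: ball_cong)
    then show ?thesis
      using Lp_tendsto_iff_diamond_tendsto[where R="\<lambda>k. seqcomp S (Suc k)",
          OF rearrangement_seqcomp[OF S] T p]
      by simp
  qed
  then show ?thesis unfolding seq_approximable_def ex_seq_in_image_iff by (rule ex_cong)
qed

lemma weakly_approximable_Lp_imp_diamond:
  assumes p: "1 \<le> p" and T: "rearrangement T" and W: "\<forall>W\<in>\<W>. rearrangement W"
    and approx: "weakly_approximable (Lp_dist_pow p) (Lp_plus p) \<W> T"
  shows "weakly_approximable ind_dist fin_meas_sets (diamond ` \<W>) (diamond T)"
  unfolding weakly_approximable_def ex_seq_in_image_iff
proof
  fix A :: "'a set" assume A: "A \<in> fin_meas_sets"
  have "indicator A \<in> Lp_plus p" using indicator_in_Lp_plus[OF A] p by simp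
  then obtain S where S: "\<forall>k. S k \<in> \<W>"
    "(\<lambda>k. Lp_dist_pow p (S k (indicator A)) (T (indicator A))) \<longlonglongrightarrow> 0"
    using approx unfolding weakly_approximable_def by blast
  moreover have "Lp_dist_pow p (S k (indicator A)) (T (indicator A)) =
      ind_dist (diamond (S k) A) (diamond T A)" for k
    using S(1) W p by (intro Lp_dist_pow_indicator[OF _ T A]) auto
  ultimately show "\<exists>S. (\<forall>k. S k \<in> \<W>) \<and> (\<lambda>k. ind_dist (diamond (S k) A) (diamond T A)) \<longlonglongrightarrow> 0"
    by auto
qed

lemma approximable_fin_meas_iff_compact:
  assumes D: "\<forall>D\<in>\<D>. nonexpansive_set_map D" and D': "nonexpansive_set_map D'"
  shows "approximable ind_dist fin_meas_sets \<D> D' \<longleftrightarrow> approximable ind_dist compact_sets \<D> D'"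
proof
  assume "approximable ind_dist fin_meas_sets \<D> D'"
  then show "approximable ind_dist compact_sets \<D> D'"
    unfolding approximable_def using compact_sets_subset_fin_meas_sets by (meson subsetD)
next
  assume "approximable ind_dist compact_sets \<D> D'"
  then obtain G where G: "\<forall>k. G k \<in> \<D>"
    and conv: "\<forall>K\<in>compact_sets. (\<lambda>k. ind_dist (G k K) (D' K)) \<longlonglongrightarrow> 0"
    unfolding approximable_def by blast
  have "\<And>k. nonexpansive_set_map (G k)" using G D by blast
  then show "approximable ind_dist fin_meas_sets \<D> D'"
    unfolding approximable_def using G tendsto_ind_dist_fin_meas_if_compact[OF _ D' conv]
    by (intro exI[of _ G]) blast
qed

lemma seq_approximable_fin_meas_iff_compact:
  assumes D: "\<forall>D\<in>\<D>. nonexpansive_set_map D" and D': "nonexpansive_set_map D'"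
  shows "seq_approximable ind_dist fin_meas_sets \<D> D' \<longleftrightarrow> seq_approximable ind_dist compact_sets \<D> D'"
proof
  assume "seq_approximable ind_dist fin_meas_sets \<D> D'"
  then show "seq_approximable ind_dist compact_sets \<D> D'"
    unfolding seq_approximable_def using compact_sets_subset_fin_meas_sets by (meson subsetD)
next
  assume "seq_approximable ind_dist compact_sets \<D> D'"
  then obtain G where G: "\<forall>k. G k \<in> \<D>"
    and conv: "\<forall>K\<in>compact_sets. (\<lambda>k. ind_dist (seqcomp G (Suc k) K) (D' K)) \<longlonglongrightarrow> 0"
    unfolding seq_approximable_def by blast
  have "\<And>k. nonexpansive_set_map (seqcomp G (Suc k))"
    using G D by (intro nonexpansive_set_map_seqcomp) blast
  then show "seq_approximable ind_dist fin_meas_sets \<D> D'"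
    unfolding seq_approximable_def using G tendsto_ind_dist_fin_meas_if_compact[OF _ D' conv]
    by (intro exI[of _ G]) blast
qed

lemma weakly_approximable_fin_meas_iff_compact:
  assumes D: "\<forall>D\<in>\<D>. nonexpansive_set_map D" and D': "nonexpansive_set_map D'"
  shows "weakly_approximable ind_dist fin_meas_sets \<D> D' \<longleftrightarrow> weakly_approximable ind_dist compact_sets \<D> D'"
  unfolding weakly_approximable_def
  using compact_sets_subset_fin_meas_sets ex_tendsto_ind_dist_fin_meas_if_compact[OF D D'] by (meson subsetD)

theorem theorem5p2:
  fixes p :: real
    and T :: "('a::euclidean_space \<Rightarrow> real) \<Rightarrow> ('a \<Rightarrow> real)"
    and \<W> :: "(('a \<Rightarrow> real) \<Rightarrow> ('a \<Rightarrow> real)) set"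
  assumes "1 \<le> p"
    and "rearrangement T"
    and "\<forall>W\<in>\<W>. rearrangement W"
  shows "(approximable (Lp_dist_pow p) (Lp_plus p) \<W> T
            \<longleftrightarrow> approximable ind_dist fin_meas_sets (diamond ` \<W>) (diamond T))
       \<and> (approximable ind_dist fin_meas_sets (diamond ` \<W>) (diamond T)
            \<longleftrightarrow> approximable ind_dist compact_sets (diamond ` \<W>) (diamond T))
       \<and> (seq_approximable (Lp_dist_pow p) (Lp_plus p) \<W> T
            \<longleftrightarrow> seq_approximable ind_dist fin_meas_sets (diamond ` \<W>) (diamond T))
       \<and> (seq_approximable ind_dist fin_meas_sets (diamond ` \<W>) (diamond T)
            \<longleftrightarrow> seq_approximable ind_dist compact_sets (diamond ` \<W>) (diamond T))
       \<and> (weakly_approximable (Lp_dist_pow p) (Lp_plus p) \<W> T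
            \<longrightarrow> weakly_approximable ind_dist fin_meas_sets (diamond ` \<W>) (diamond T))
       \<and> (weakly_approximable ind_dist fin_meas_sets (diamond ` \<W>) (diamond T)
            \<longleftrightarrow> weakly_approximable ind_dist compact_sets (diamond ` \<W>) (diamond T))"
proof -
  have D: "\<forall>D\<in>diamond ` \<W>. nonexpansive_set_map D" and D': "nonexpansive_set_map (diamond T)"
    using assms(2,3) nonexpansive_set_map_diamond by blast+
  show ?thesis
  proof (intro conjI impI)
    show "weakly_approximable ind_dist fin_meas_sets (diamond ` \<W>) (diamond T)"
      if "weakly_approximable (Lp_dist_pow p) (Lp_plus p) \<W> T"
      using weakly_approximable_Lp_imp_diamond[OF assms that] .
  qed (fact approximable_Lp_iff_diamond[OF assms] seq_approximable_Lp_iff_diamond[OF assms]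
      approximable_fin_meas_iff_compact[OF D D'] seq_approximable_fin_meas_iff_compact[OF D D']
      weakly_approximable_fin_meas_iff_compact[OF D D'])+
qed

end
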